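(* Let $n \ge 3$ be an integer. For a binary string $y$ let $r_y$ be its number of runs, $u_y$ its number of runs of length one, and $b_y$ the number of runs of length one occurring at the start or end of $y$. Define \[ f'(r,u,b) = \begin{cases} \frac{1}{r}\left(1 - \frac{u-b}{r^2}\right) & \text{if } u-b \ge 2,\\ \frac{1}{r} & \text{if } u-b \le 1,\end{cases} \] and let $z \in \mathbb{R}^{[2]^{n-1}}$ be given by $z_y = f'(r_y,u_y,b_y)$. Then \[ \sum_{y \in [2]^{n-1}} z_y \ \ge\ \frac{2^n - 2}{n+1}\left(1 + \frac{1}{n-1} - \frac{3}{(n-1)(n-2)}\right). \]
   Context: $[2]=\{0,1\}$ and $[2]^m$ is the set of binary strings of length $m$. A run of a string is a maximal block of consecutive equal symbols. *)

theory Defs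
  imports Complex_Main
begin

fun runs :: "'a list \<Rightarrow> nat list" where
  "runs [] = []"
| "runs (x # xs) = (let k = length (takeWhile (\<lambda>y. y = x) xs)
                    in Suc k # runs (drop k xs))"

definition num_runs :: "'a list \<Rightarrow> nat" where
  "num_runs y = length (runs y)"

definition num_unit_runs :: "'a list \<Rightarrow> nat" where
  "num_unit_runs y = length (filter (\<lambda>l. l = 1) (runs y))"

(* number of runs of length one occurring at the start or at the end of y
   (a run that is both first and last is counted once) *)
definition num_end_unit_runs :: "'a list \<Rightarrow> nat" where
  "num_end_unit_runs y =
     card {i. i < length (runs y) \<and> (i = 0 \<or> i = length (runs y) - 1) \<and> runs y ! i = 1}"

definition f' :: "nat \<Rightarrow> nat \<Rightarrow> nat \<Rightarrow> real" where
  "f' r u b = (if int u - int b \<ge> 2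
               then (1 / real r) * (1 - (real u - real b) / (real r)^2)
               else 1 / real r)"

definition z :: "bool list \<Rightarrow> real" where
  "z y = f' (num_runs y) (num_unit_runs y) (num_end_unit_runs y)"

end

theory Submission
  imports Defs
begin

text \<open>
  A string y of length m is determined by its first symbol and its set of change positions
  C(y) \<subseteq> {0..<m-1}, where y changes between positions i and i+1. Then y has |C(y)|+1 runs,
  and its interior runs of length one correspond to the pairs i, i+1 both in C(y). Writing
  P(S) for the number of such pairs, z_y \<ge> 1/r - P/r^3 with r = |C(y)|+1 in both cases of f',
  so the sum is at least twice the sum over all S \<subseteq> {0..<k}, k = n-2, of
  1/(|S|+1) - P(S)/(|S|+1)^3. The first part sums to (2^(k+1)-1)/(k+1). Exchanging sums,
  the second part is (k-1) times sum_j C(k-2,j)/(j+3)^3, and replacing (j+3)^3 by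
  (j+1)(j+2)(j+3) turns it into a binomial sum bounded by (2^(k+1)-1)/((k-1)k(k+1)).
\<close>

definition changes :: "'a list \<Rightarrow> nat set" where
  "changes y = {i. Suc i < length y \<and> y ! i \<noteq> y ! Suc i}"

definition adjacent_pairs :: "nat set \<Rightarrow> nat" where
  "adjacent_pairs S = card {i\<in>S. Suc i \<in> S}"

definition interior_unit_runs :: "nat list \<Rightarrow> nat" where
  "interior_unit_runs R = length (filter (\<lambda>l. l = 1) (butlast (tl R)))"

subsection \<open>Runs and change positions\<close>

lemma runs_Cons_Cons:
  "runs (x # y # ys) =
     (if x = y then (case runs (y # ys) of a # R \<Rightarrow> Suc a # R | [] \<Rightarrow> []) else 1 # runs (y # ys))"
  by (simp add: Let_def)

lemma runs_ConsE: obtains k R where "runs (x # ys) = Suc k # R"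
  by (simp add: Let_def)

lemma runs_singleton [simp]: "runs [x] = [1]"
  by (simp add: Let_def)

declare runs.simps(2)[simp del]

lemma finite_changes [simp]: "finite (changes y)"
  by (rule finite_subset[of _ "{..<length y}"]) (auto simp: changes_def)

lemma changes_singleton [simp]: "changes [x] = {}"
  by (simp add: changes_def)

lemma changes_Cons:
  assumes "ys \<noteq> []"
  shows "changes (x # ys) = (if x = hd ys then Suc ` changes ys else insert 0 (Suc ` changes ys))"
proof -
  have "i \<in> changes (x # ys) \<longleftrightarrow>
        i \<in> (if x = hd ys then Suc ` changes ys else insert 0 (Suc ` changes ys))" for i
    using assms by (cases i; cases ys) (auto simp: changes_def)
  then show ?thesis by blast
qed

lemma length_runs_eq_card_changes:
  "y \<noteq> [] \<Longrightarrow> length (runs y) = Suc (card (changes y))"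
proof (induction y)
  case (Cons x ys)
  show ?case
  proof (cases ys)
    case (Cons y0 ys')
    then obtain k R where "runs ys = Suc k # R" using runs_ConsE by metis
    moreover have "0 \<notin> Suc ` changes ys" by auto
    ultimately show ?thesis using Cons.IH Cons
      by (auto simp: changes_Cons runs_Cons_Cons card_image)
  qed simp
qed simp

lemma first_run_unit_iff_0_in_changes:
  assumes "ys \<noteq> []"
  shows "(hd (runs ys) = 1 \<and> tl (runs ys) \<noteq> []) \<longleftrightarrow> 0 \<in> changes ys"
proof (cases ys)
  case (Cons y0 ys')
  show ?thesis
  proof (cases ys')
    case (Cons y1 ys'')
    obtain k R where "runs (y1 # ys'') = Suc k # R" using runs_ConsE by metis
    then show ?thesis using \<open>ys = y0 # ys'\<close> Cons by (auto simp: runs_Cons_Cons changes_def)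
  qed (simp add: \<open>ys = y0 # ys'\<close>)
qed (use assms in simp)

lemma adjacent_pairs_image_Suc [simp]: "adjacent_pairs (Suc ` S) = adjacent_pairs S"
proof -
  have "{i\<in>Suc ` S. Suc i \<in> Suc ` S} = Suc ` {i\<in>S. Suc i \<in> S}" by auto
  then show ?thesis by (simp add: adjacent_pairs_def card_image)
qed

lemma adjacent_pairs_insert_0:
  assumes "finite S"
  shows "adjacent_pairs (insert 0 (Suc ` S)) = adjacent_pairs S + (if 0 \<in> S then 1 else 0)"
proof -
  have "{i\<in>insert 0 (Suc ` S). Suc i \<in> insert 0 (Suc ` S)} =
        (if 0 \<in> S then {0} else {}) \<union> Suc ` {i\<in>S. Suc i \<in> S}" by auto
  then show ?thesis using assms by (auto simp: adjacent_pairs_def card_image)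
qed

lemma interior_unit_runs_eq_adjacent_pairs:
  "y \<noteq> [] \<Longrightarrow> interior_unit_runs (runs y) = adjacent_pairs (changes y)"
proof (induction y)
  case (Cons x ys)
  show ?case
  proof (cases ys)
    case Nil
    then show ?thesis by (simp add: interior_unit_runs_def adjacent_pairs_def runs.simps)
  next
    case (Cons y0 ys')
    obtain k R where kR: "runs ys = Suc k # R" using Cons runs_ConsE by metis
    have IH: "interior_unit_runs (Suc k # R) = adjacent_pairs (changes ys)"
      using Cons.IH Cons kR by simp
    show ?thesis
    proof (cases "x = y0")
      case True
      then show ?thesis using IH kR Cons
        by (simp add: runs_Cons_Cons changes_Cons interior_unit_runs_def)
    next
      case False
      have "(k = 0 \<and> R \<noteq> []) \<longleftrightarrow> 0 \<in> changes ys"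
        using first_run_unit_iff_0_in_changes[of ys] kR Cons by simp
      then show ?thesis using IH kR Cons False
        by (auto simp: runs_Cons_Cons changes_Cons adjacent_pairs_insert_0 interior_unit_runs_def)
    qed
  qed
qed simp

lemma unit_runs_minus_end_unit_runs:
  fixes R :: "nat list"
  assumes "R \<noteq> []"
  shows "length (filter (\<lambda>l. l = 1) R)
           - card {i. i < length R \<and> (i = 0 \<or> i = length R - 1) \<and> R ! i = 1}
         = interior_unit_runs R"
proof -
  obtain a S where R: "R = a # S" using assms by (cases R) auto
  show ?thesis
  proof (cases S rule: rev_cases)
    case Nil
    then have "{i. i < length R \<and> (i = 0 \<or> i = length R - 1) \<and> R ! i = 1} = (if a = 1 then {0} else {})"
      using R by auto
    then show ?thesis using R Nil by (simp add: interior_unit_runs_def)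
  next
    case (snoc S' l)
    have "R ! 0 = a" "R ! Suc (length S') = l" "length R = Suc (Suc (length S'))"
      using R snoc by (auto simp: nth_append)
    then have "{i. i < length R \<and> (i = 0 \<or> i = length R - 1) \<and> R ! i = 1} =
          (if a = 1 then {0} else {}) \<union> (if l = 1 then {Suc (length S')} else {})"
      by (auto simp del: length_greater_0_conv; metis gr0I)
    then show ?thesis using R snoc by (simp add: interior_unit_runs_def)
  qed
qed

lemma z_lower_bound:
  assumes "y \<noteq> []"
  defines "r \<equiv> real (card (changes y)) + 1"
  shows "1 / r - real (adjacent_pairs (changes y)) / r ^ 3 \<le> z y"
proof -
  have "runs y \<noteq> []" using length_runs_eq_card_changes[OF assms(1)] by auto
  then have pairs: "num_unit_runs y - num_end_unit_runs y = adjacent_pairs (changes y)"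
    using unit_runs_minus_end_unit_runs interior_unit_runs_eq_adjacent_pairs[OF assms(1)]
    by (simp add: num_unit_runs_def num_end_unit_runs_def)
  have le: "num_end_unit_runs y \<le> num_unit_runs y"
    unfolding num_end_unit_runs_def num_unit_runs_def length_filter_conv_card
    by (rule card_mono) auto
  have "num_runs y = r" by (simp add: num_runs_def r_def length_runs_eq_card_changes[OF assms(1)])
  moreover have "r > 0" by (simp add: r_def)
  ultimately show ?thesis using pairs le
    by (auto simp: z_def f'_def of_nat_diff[symmetric] field_simps power3_eq_cube power2_eq_square)
qed

subsection \<open>Counting strings by change positions\<close>

lemma nth_Suc_eq_changes:
  fixes y :: "bool list"
  shows "Suc i < length y \<Longrightarrow> y ! Suc i = (if i \<in> changes y then \<not> y ! i else y ! i)"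
  by (auto simp: changes_def)

lemma inj_on_hd_changes: "inj_on (\<lambda>y :: bool list. (hd y, changes y)) {y. length y = m}"
proof (rule inj_onI)
  fix y y' :: "bool list"
  assume y: "y \<in> {y. length y = m}" and y': "y' \<in> {y. length y = m}"
    and eq: "(hd y, changes y) = (hd y', changes y')"
  have "i < m \<longrightarrow> y ! i = y' ! i" for i
  proof (induction i)
    case 0
    show ?case
    proof
      assume "0 < m"
      then have "y \<noteq> []" "y' \<noteq> []" using y y' by auto
      then show "y ! 0 = y' ! 0" using eq by (simp add: hd_conv_nth)
    qed
  next
    case (Suc i)
    show ?case using Suc y y' eq nth_Suc_eq_changes[of i y] nth_Suc_eq_changes[of i y'] by auto
  qed
  then show "y = y'" using y y' by (auto intro: nth_equalityI)
qed

lemma bij_betw_hd_changes: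
  assumes "m \<ge> 1"
  shows "bij_betw (\<lambda>y. (hd y, changes y)) {y :: bool list. length y = m} (UNIV \<times> Pow {..<m-1})"
proof -
  let ?f = "\<lambda>y :: bool list. (hd y, changes y)"
  have "?f ` {y. length y = m} \<subseteq> UNIV \<times> Pow {..<m-1}"
    by (auto simp: changes_def)
  moreover have "card (?f ` {y. length y = m}) = card (UNIV \<times> Pow {..<m-1} :: (bool \<times> nat set) set)"
    using assms card_image[OF inj_on_hd_changes] card_lists_length_eq[of "UNIV :: bool set" m]
    by (simp add: card_cartesian_product card_Pow power_Suc[symmetric])
  ultimately have "?f ` {y. length y = m} = UNIV \<times> Pow {..<m-1}"
    by (intro card_subset_eq) auto
  then show ?thesis using inj_on_hd_changes by (simp add: bij_betw_def)
qed

lemma sum_lists_changes: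
  fixes g :: "nat set \<Rightarrow> 'a :: comm_semiring_1"
  assumes "m \<ge> 1"
  shows "(\<Sum>y\<in>{y :: bool list. length y = m}. g (changes y)) = 2 * (\<Sum>S\<in>Pow {..<m-1}. g S)"
proof -
  have "(\<Sum>y\<in>{y :: bool list. length y = m}. g (changes y))
          = (\<Sum>p\<in>(UNIV :: bool set) \<times> Pow {..<m-1}. g (snd p))"
    using sum.reindex_bij_betw[OF bij_betw_hd_changes[OF assms], of "g \<circ> snd"] by simp
  also have "\<dots> = 2 * (\<Sum>S\<in>Pow {..<m-1}. g S)"
    by (simp add: sum.cartesian_product' UNIV_bool mult_2)
  finally show ?thesis .
qed

subsection \<open>Sums over subsets by cardinality\<close>

lemma sum_Pow_card:
  fixes h :: "nat \<Rightarrow> 'a :: comm_semiring_1"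
  assumes "finite A"
  shows "(\<Sum>S\<in>Pow A. h (card S)) = (\<Sum>j\<le>card A. of_nat (card A choose j) * h j)"
proof -
  have "(\<Sum>S\<in>Pow A. h (card S)) = (\<Sum>S\<in>Pow A. \<Sum>j\<le>card A. if card S = j then h j else 0)"
    using assms by (intro sum.cong) (auto simp: card_mono)
  also have "\<dots> = (\<Sum>j\<le>card A. \<Sum>S\<in>Pow A. if card S = j then h j else 0)"
    by (rule sum.swap)
  also have "\<dots> = (\<Sum>j\<le>card A. of_nat (card A choose j) * h j)"
  proof (rule sum.cong[OF refl])
    fix j
    have "(\<Sum>S\<in>Pow A. if card S = j then h j else 0) = (\<Sum>S\<in>{S\<in>Pow A. card S = j}. h j)"
      using assms by (intro sum.inter_filter[symmetric]) simp
    also have "{S\<in>Pow A. card S = j} = {S. S \<subseteq> A \<and> card S = j}" by auto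
    finally show "(\<Sum>S\<in>Pow A. if card S = j then h j else 0) = of_nat (card A choose j) * h j"
      using n_subsets[OF assms, of j] by simp
  qed
  finally show ?thesis .
qed

lemma sum_supsets_card:
  fixes h :: "nat \<Rightarrow> 'a :: comm_semiring_1"
  assumes "finite A" and "B \<subseteq> A"
  shows "(\<Sum>S\<in>{S\<in>Pow A. B \<subseteq> S}. h (card S))
           = (\<Sum>j\<le>card A - card B. of_nat (card A - card B choose j) * h (j + card B))"
proof -
  have B: "finite B" using assms finite_subset by blast
  have "{S\<in>Pow A. B \<subseteq> S} = (\<lambda>E. E \<union> B) ` Pow (A - B)"
  proof (intro equalityI subsetI)
    fix S assume "S \<in> {S\<in>Pow A. B \<subseteq> S}"
    then show "S \<in> (\<lambda>E. E \<union> B) ` Pow (A - B)" by (intro image_eqI[of _ _ "S - B"]) auto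
  qed (use assms in auto)
  moreover have "inj_on (\<lambda>E. E \<union> B) (Pow (A - B))"
    by (rule inj_onI) blast
  moreover have "card (E \<union> B) = card E + card B" if "E \<in> Pow (A - B)" for E
    using that assms B by (intro card_Un_disjoint) (auto intro: finite_subset)
  ultimately have "(\<Sum>S\<in>{S\<in>Pow A. B \<subseteq> S}. h (card S)) = (\<Sum>E\<in>Pow (A - B). h (card E + card B))"
    by (simp add: sum.reindex)
  also have "\<dots> = (\<Sum>j\<le>card A - card B. of_nat (card A - card B choose j) * h (j + card B))"
    using sum_Pow_card[of "A - B" "\<lambda>j. h (j + card B)"] assms by (simp add: card_Diff_subset B)
  finally show ?thesis .
qed

lemma sum_adjacent_pairs_Pow:
  fixes h :: "nat \<Rightarrow> 'a :: comm_semiring_1"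
  shows "(\<Sum>S\<in>Pow {..<k}. of_nat (adjacent_pairs S) * h (card S))
           = of_nat (k - 1) * (\<Sum>j\<le>k-2. of_nat (k - 2 choose j) * h (j + 2))"
proof -
  have pairs: "of_nat (adjacent_pairs S) = (\<Sum>i<k-1. if {i, Suc i} \<subseteq> S then 1 else 0 :: 'a)"
    if "S \<subseteq> {..<k}" for S
  proof -
    have "{i\<in>S. Suc i \<in> S} = {i\<in>{..<k-1}. {i, Suc i} \<subseteq> S}" using that by auto
    then show ?thesis by (simp add: adjacent_pairs_def flip: sum.inter_filter)
  qed
  have "(\<Sum>S\<in>Pow {..<k}. of_nat (adjacent_pairs S) * h (card S))
          = (\<Sum>S\<in>Pow {..<k}. \<Sum>i<k-1. if {i, Suc i} \<subseteq> S then h (card S) else 0)"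
    by (intro sum.cong refl) (auto simp: pairs sum_distrib_right intro: sum.cong)
  also have "\<dots> = (\<Sum>i<k-1. \<Sum>S\<in>{S\<in>Pow {..<k}. {i, Suc i} \<subseteq> S}. h (card S))"
    by (subst sum.swap) (intro sum.cong refl sum.inter_filter[symmetric], simp)
  also have "\<dots> = (\<Sum>i<k-1. \<Sum>j\<le>k-2. of_nat (k - 2 choose j) * h (j + 2))"
    by (intro sum.cong refl, subst sum_supsets_card) (auto simp: numeral_2_eq_2)
  finally show ?thesis by simp
qed

subsection \<open>Binomial sums\<close>

lemma sum_binomial_div_Suc:
  "(\<Sum>j\<le>k. real (k choose j) / (real j + 1)) = (2 ^ (k + 1) - 1) / (real k + 1)"
proof -
  have "real (k choose j) / (real j + 1) = real (Suc k choose Suc j) / (real k + 1)" for j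
    using Suc_times_binomial[of j k] by (simp add: field_simps flip: of_nat_mult)
  moreover have "(\<Sum>j\<le>k. Suc k choose Suc j) = 2 ^ (k + 1) - 1"
    using choose_row_sum[of "Suc k"] sum.atMost_Suc_shift[of "\<lambda>i. Suc k choose i" k] by simp
  then have "(\<Sum>j\<le>k. real (Suc k choose Suc j)) = 2 ^ (k + 1) - 1"
    by (simp add: of_nat_diff del: binomial_Suc_Suc flip: of_nat_sum)
  ultimately show ?thesis
    by (simp add: sum_divide_distrib[symmetric] del: binomial_Suc_Suc)
qed

lemma sum_binomial_div_rising3_le:
  "(\<Sum>j\<le>p. real (p choose j) / ((real j + 1) * (real j + 2) * (real j + 3)))
     \<le> (2 ^ (p + 3) - 1) / ((real p + 1) * (real p + 2) * (real p + 3))"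
proof -
  have "real (p choose j) / ((real j + 1) * (real j + 2) * (real j + 3))
          = real (p + 3 choose (j + 3)) / ((real p + 1) * (real p + 2) * (real p + 3))" for j
  proof -
    have "Suc j * Suc (Suc j) * Suc (Suc (Suc j)) * (Suc (Suc (Suc p)) choose Suc (Suc (Suc j)))
            = Suc p * Suc (Suc p) * Suc (Suc (Suc p)) * (p choose j)"
      using Suc_times_binomial[of j p] Suc_times_binomial[of "Suc j" "Suc p"]
        Suc_times_binomial[of "Suc (Suc j)" "Suc (Suc p)"]
      by (metis mult.commute mult.left_commute)
    from arg_cong[OF this, of real] show ?thesis
      by (simp add: numeral_3_eq_3 field_simps add_nonneg_eq_0_iff)
  qed
  moreover have "(\<Sum>j\<le>p. p + 3 choose (j + 3)) \<le> 2 ^ (p + 3) - 1"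
  proof -
    have "2 ^ (p + 3) = (\<Sum>i\<le>Suc (Suc (Suc p)). p + 3 choose i)"
      using choose_row_sum[of "p + 3"] by (simp add: numeral_3_eq_3)
    also have "\<dots> = 1 + (p + 3) + (p + 3 choose 2) + (\<Sum>j\<le>p. p + 3 choose (j + 3))"
      by (simp del: sum.atMost_Suc add: sum.atMost_Suc_shift numeral_3_eq_3 numeral_2_eq_2)
    finally show ?thesis by linarith
  qed
  then have "real (\<Sum>j\<le>p. p + 3 choose (j + 3)) \<le> real (2 ^ (p + 3) - 1)"
    by (rule of_nat_mono)
  then have "(\<Sum>j\<le>p. real (p + 3 choose (j + 3))) \<le> 2 ^ (p + 3) - 1"
    by (simp add: of_nat_diff)
  ultimately show ?thesis
    by (simp add: sum_divide_distrib[symmetric] divide_right_mono)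
qed

lemma sum_Pow_inverse_Suc_card:
  "(\<Sum>S\<in>Pow {..<k}. 1 / (real (card S) + 1)) = (2 ^ (k + 1) - 1) / (real k + 1)"
  using sum_Pow_card[of "{..<k}" "\<lambda>j. 1 / (real j + 1)"] sum_binomial_div_Suc[of k] by simp

lemma sum_adjacent_pairs_div_cube_le:
  "(\<Sum>S\<in>Pow {..<k}. real (adjacent_pairs S) / (real (card S) + 1) ^ 3)
     \<le> (2 ^ (k + 1) - 1) / (real k * (real k + 1))"
proof -
  have "(\<Sum>S\<in>Pow {..<k}. real (adjacent_pairs S) / (real (card S) + 1) ^ 3)
          = real (k - 1) * (\<Sum>j\<le>k-2. real (k - 2 choose j) / (real j + 3) ^ 3)"
    using sum_adjacent_pairs_Pow[where k = k and h = "\<lambda>c. 1 / (real c + 1) ^ 3"]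
    by (simp add: ac_simps)
  also have "\<dots> \<le> (2 ^ (k + 1) - 1) / (real k * (real k + 1))"
  proof (cases "k \<ge> 2")
    case True
    have "(\<Sum>j\<le>k-2. real (k - 2 choose j) / (real j + 3) ^ 3)
            \<le> (\<Sum>j\<le>k-2. real (k - 2 choose j) / ((real j + 1) * (real j + 2) * (real j + 3)))"
      by (intro sum_mono divide_left_mono) (auto simp: power3_eq_cube intro!: mult_mono)
    also have "\<dots> \<le> (2 ^ (k + 1) - 1) / ((real k - 1) * real k * (real k + 1))"
    proof -
      have "k - 2 + 3 = k + 1" "real (k - 2) = real k - 2" using True by (auto simp: of_nat_diff)
      then show ?thesis
        using sum_binomial_div_rising3_le[of "k - 2"] by (simp add: algebra_simps)
    qed
    finally have "(\<Sum>j\<le>k-2. real (k - 2 choose j) / (real j + 3) ^ 3)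
                    \<le> (2 ^ (k + 1) - 1) / ((real k - 1) * real k * (real k + 1))" .
    then have "real (k - 1) * (\<Sum>j\<le>k-2. real (k - 2 choose j) / (real j + 3) ^ 3)
                 \<le> real (k - 1) * ((2 ^ (k + 1) - 1) / ((real k - 1) * real k * (real k + 1)))"
      by (rule mult_left_mono) simp
    then show ?thesis using True by (simp add: of_nat_diff)
  next
    case False
    have "(1::real) \<le> 2 ^ (k + 1)" by (rule one_le_power) simp
    then show ?thesis using False by (simp add: zero_le_divide_iff)
  qed
  finally show ?thesis .
qed

lemma bound_eq_difference:
  fixes x A :: real
  assumes "x > 0"
  shows "2 * A / (x + 3) * (1 + 1 / (x + 1) - 3 / ((x + 1) * x)) = 2 * (A / (x + 1) - A / (x * (x + 1)))"
proof -
  have "1 + 1 / (x + 1) - 3 / ((x + 1) * x) = (x + 3) * (x - 1) / ((x + 1) * x)"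
    using assms by (simp add: divide_simps) (simp add: algebra_simps)
  moreover have "A / (x + 1) - A / (x * (x + 1)) = A * (x - 1) / ((x + 1) * x)"
    using assms by (simp add: divide_simps) (simp add: algebra_simps)
  ultimately show ?thesis using assms by simp
qed

theorem lemma2:
  fixes n :: nat
  assumes "n \<ge> 3"
  shows "(\<Sum>y\<in>{y :: bool list. length y = n - 1}. z y)
           \<ge> (2 ^ n - 2) / (real n + 1)
              * (1 + 1 / (real n - 1) - 3 / ((real n - 1) * (real n - 2)))"
proof -
  define k where "k = n - 2"
  have n: "n = k + 2" and k: "k \<ge> 1" using assms by (auto simp: k_def)
  define A :: real where "A = 2 ^ (k + 1) - 1"
  let ?g = "\<lambda>S. 1 / (real (card S) + 1) - real (adjacent_pairs S) / (real (card S) + 1) ^ 3"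
  have n_eqs: "(2::real) ^ n - 2 = 2 * A" "real n + 1 = real k + 3" "real n - 1 = real k + 1"
    "real n - 2 = real k"
    by (simp_all add: A_def n)
  have "(2 ^ n - 2) / (real n + 1) * (1 + 1 / (real n - 1) - 3 / ((real n - 1) * (real n - 2)))
          = 2 * (A / (real k + 1) - A / (real k * (real k + 1)))"
    unfolding n_eqs using k by (intro bound_eq_difference) simp
  also have "\<dots> \<le> 2 * (\<Sum>S\<in>Pow {..<k}. ?g S)"
    using sum_adjacent_pairs_div_cube_le[of k, folded A_def] sum_Pow_inverse_Suc_card[of k, folded A_def]
    by (simp add: sum_subtractf)
  also have "\<dots> = (\<Sum>y\<in>{y :: bool list. length y = n - 1}. ?g (changes y))"
    using sum_lists_changes[of "k + 1" ?g] by (simp add: n)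
  also have "\<dots> \<le> (\<Sum>y\<in>{y. length y = n - 1}. z y)"
    using assms by (intro sum_mono z_lower_bound) auto
  finally show ?thesis .
qed

end
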